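(* Let $n\ge1$ and $1>\mu_1>\mu_2>\dots>\mu_{n+1}>0$. Let $\mathcal{P}$ be the set of all polynomials $p(x)=(x-\lambda_1)(x-\lambda_2)\cdots(x-\lambda_n)$ with real $\lambda_k$ satisfying $\mu_k\ge\lambda_k\ge\mu_{k+1}$ for $k=1,\dots,n$. Then there exist constants $C>0$ and $0<c<1$, depending only on $\mu_1,\dots,\mu_{n+1}$, such that for every $m\ge1$ and all $p_1,\dots,p_m\in\mathcal{P}$, $$\|F(p_1)F(p_2)\cdots F(p_m)\|\le Cc^m.$$
   Context: For a monic polynomial $p(z)=z^n+b_{n-1}z^{n-1}+\dots+b_0$, its Frobenius matrix $F(p)$ is the $n\times n$ matrix whose first row is $(-b_{n-1},-b_{n-2},\dots,-b_0)$, whose entries $(i+1,i)$ for $i=1,\dots,n-1$ equal $1$, and all other entries are $0$. $\|\cdot\|$ denotes any fixed matrix norm (all are equivalent). *)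

theory Defs
  imports "Jordan_Normal_Form.Matrix" "HOL-Computational_Algebra.Polynomial"
begin

definition frob :: "real poly \<Rightarrow> real mat" where
  "frob p = (let n = degree p in
     mat n n (\<lambda>(i,j). if i = 0 then - coeff p (n - 1 - j)
                      else if i = Suc j then 1 else 0))"

definition polyset :: "nat \<Rightarrow> (nat \<Rightarrow> real) \<Rightarrow> real poly set" where
  "polyset n mu = {(\<Prod>k\<in>{1..n}. [:- l k, 1:]) | l.
                    \<forall>k\<in>{1..n}. mu (Suc k) \<le> l k \<and> l k \<le> mu k}"

text \<open>A fixed matrix norm: entrywise l1 norm (all norms are equivalent).\<close>
definition mat_norm :: "real mat \<Rightarrow> real" where
  "mat_norm A = (\<Sum>i<dim_row A. \<Sum>j<dim_col A. \<bar>A $$ (i,j)\<bar>)"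

end

theory Submission
  imports Defs
begin

text \<open>Put \<open>\<nu>\<^sub>k = \<mu>\<^sub>k\<^sub>+\<^sub>2\<close> for \<open>k < n\<close> and \<open>a = \<mu>\<^sub>1\<close>. A companion matrix
  maps the Vandermonde vector \<open>v(t) = (t\<^sup>n\<^sup>-\<^sup>1, \<dots>, t, 1)\<close> to \<open>t v(t) - p(t) e\<^sub>0\<close>, and
  \<open>e\<^sub>0 = \<Sum>\<^sub>k c\<^sub>k v(\<nu>\<^sub>k)\<close> where \<open>c\<^sub>k\<close> is the leading coefficient of the Lagrange basis
  polynomial \<open>L\<^sub>k\<close> of the nodes \<open>\<nu>\<^sub>k\<close>. Hence in the basis \<open>v(\<nu>\<^sub>0), \<dots>, v(\<nu>\<^sub>n\<^sub>-\<^sub>1)\<close>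
  the matrix \<open>F(p)\<close> acts as \<open>y \<mapsto> (\<nu>\<^sub>k y\<^sub>k - c\<^sub>k \<Sum>\<^sub>j p(\<nu>\<^sub>j) y\<^sub>j)\<^sub>k\<close>.

  Interlacing forces \<open>p(a) \<ge> 0\<close> and \<open>p(\<nu>\<^sub>j) L\<^sub>j(a) \<le> 0\<close>, so interpolating the polynomial
  \<open>p - \<omega>\<close> of degree \<open>< n\<close>, where \<open>\<omega> = \<Prod>\<^sub>k (X - \<nu>\<^sub>k)\<close>, at \<open>a\<close> gives
  \<open>\<Sum>\<^sub>j \<bar>p(\<nu>\<^sub>j)\<bar> \<bar>L\<^sub>j(a)\<bar> \<le> \<omega>(a)\<close>. Together with \<open>\<bar>c\<^sub>k\<bar> \<omega>(a) = (a - \<nu>\<^sub>k) \<bar>L\<^sub>k(a)\<bar>\<close> this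
  shows that every such \<open>F(p)\<close> contracts the weighted norm
  \<open>max\<^sub>k \<bar>y\<^sub>k\<bar> / \<bar>L\<^sub>k(a)\<bar>\<close> by the factor \<open>a\<close>. So the entries of a product of \<open>m\<close>
  such matrices are \<open>O(a\<^sup>m)\<close>, and \<open>c = \<mu>\<^sub>1\<close> works.\<close>

lemma prod_nonneg_signed:
  fixes f :: "'a \<Rightarrow> real"
  assumes "finite S" "B \<subseteq> S"
    and "\<And>x. x \<in> B \<Longrightarrow> f x \<le> 0" "\<And>x. x \<in> S - B \<Longrightarrow> f x \<ge> 0"
  shows "(-1) ^ card B * prod f S \<ge> 0"
proof -
  have "finite B" using assms(1,2) finite_subset by blast
  have "prod f S = prod f B * prod f (S - B)"
    using assms(1,2) by (metis prod.subset_diff mult.commute)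
  moreover have "prod f B = (-1) ^ card B * prod (\<lambda>x. - f x) B"
    using \<open>finite B\<close> by (induction B rule: finite_induct) auto
  moreover have "prod (\<lambda>x. - f x) B \<ge> 0" using assms(3) by (intro prod_nonneg) auto
  moreover have "prod f (S - B) \<ge> 0" using assms(4) by (intro prod_nonneg) auto
  ultimately show ?thesis by (simp add: power_mult_distrib[symmetric] mult.assoc[symmetric])
qed

lemma degree_diff_less_same_lead_coeff:
  fixes p q :: "'a::ab_group_add poly"
  assumes "0 < n" "degree p = n" "degree q = n" "lead_coeff p = lead_coeff q"
  shows "degree (p - q) < n"
proof -
  have "coeff (p - q) i = 0" if "n \<le> i" for i
    using assms that by (cases "i = n") (auto simp: coeff_eq_0)
  then have "degree (p - q) \<le> n - 1"
    using \<open>0 < n\<close> by (intro degree_le) auto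
  then show ?thesis using \<open>0 < n\<close> by linarith
qed

text \<open>\<open>vander_comb n x y\<close> is \<open>\<Sum>\<^sub>k y\<^sub>k v(x\<^sub>k)\<close>.\<close>
definition vander_comb :: "nat \<Rightarrow> (nat \<Rightarrow> 'a::comm_ring_1) \<Rightarrow> (nat \<Rightarrow> 'a) \<Rightarrow> 'a vec" where
  "vander_comb n x y = vec n (\<lambda>i. \<Sum>k<n. y k * x k ^ (n - 1 - i))"

lemma vander_comb_carrier [simp]: "vander_comb n x y \<in> carrier_vec n"
  by (simp add: vander_comb_def)

lemma dim_vec_vander_comb [simp]: "dim_vec (vander_comb n x y) = n"
  by (simp add: vander_comb_def)

lemma vander_comb_cong: "(\<And>k. k < n \<Longrightarrow> y k = y' k) \<Longrightarrow> vander_comb n x y = vander_comb n x y'"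
  by (simp add: vander_comb_def)

lemma vander_comb_diff_smult:
  "vander_comb n x (\<lambda>k. f k - s * g k) = vander_comb n x f - s \<cdot>\<^sub>v vander_comb n x g"
  by (rule eq_vecI)
    (simp_all add: vander_comb_def algebra_simps sum_subtractf sum_distrib_left)

lemma abs_vander_comb_le:
  fixes x y :: "nat \<Rightarrow> real"
  assumes "\<forall>k<n. \<bar>x k\<bar> \<le> 1" and "i < n"
  shows "\<bar>vander_comb n x y $ i\<bar> \<le> (\<Sum>k<n. \<bar>y k\<bar>)"
proof -
  have "\<bar>vander_comb n x y $ i\<bar> \<le> (\<Sum>k<n. \<bar>y k\<bar> * \<bar>x k\<bar> ^ (n - 1 - i))"
    using \<open>i < n\<close> by (simp add: vander_comb_def order_trans[OF sum_abs] abs_mult power_abs)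
  also have "\<dots> \<le> (\<Sum>k<n. \<bar>y k\<bar>)"
    using assms(1) by (intro sum_mono mult_right_le_one_le power_le_one) auto
  finally show ?thesis .
qed

lemma frob_carrier: "frob p \<in> carrier_mat (degree p) (degree p)"
  by (simp add: frob_def Let_def)

lemma frob_row_times_powers:
  assumes "degree p = n" "lead_coeff p = 1" "i < n"
  shows "(\<Sum>j<n. frob p $$ (i, j) * t ^ (n - 1 - j)) = t ^ (n - i) - (if i = 0 then poly p t else 0)"
proof (cases "i = 0")
  case True
  have "(\<Sum>j<n. frob p $$ (i, j) * t ^ (n - 1 - j)) = - (\<Sum>j<n. coeff p (n - Suc j) * t ^ (n - Suc j))"
    using True assms by (simp add: frob_def Let_def sum_negf)
  also have "(\<Sum>j<n. coeff p (n - Suc j) * t ^ (n - Suc j)) = (\<Sum>j<n. coeff p j * t ^ j)"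
    by (rule sum.nat_diff_reindex)
  also have "poly p t = (\<Sum>j<n. coeff p j * t ^ j) + t ^ n"
    using assms by (simp add: poly_altdef lessThan_Suc_atMost[symmetric])
  ultimately show ?thesis using True by simp
next
  case False
  have "(\<Sum>j<n. frob p $$ (i, j) * t ^ (n - 1 - j)) = (\<Sum>j<n. if j = i - 1 then t ^ (n - 1 - j) else 0)"
    using False assms by (intro sum.cong) (auto simp: frob_def Let_def)
  also have "\<dots> = t ^ (n - i)" using assms(3) False by (simp add: Suc_diff_Suc)
  finally show ?thesis using False by simp
qed

lemma frob_mult_vander_comb:
  assumes "degree p = n" "lead_coeff p = 1"
  shows "frob p *\<^sub>v vander_comb n x y
    = vander_comb n x (\<lambda>k. x k * y k) - (\<Sum>k<n. poly p (x k) * y k) \<cdot>\<^sub>v unit_vec n 0"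
    (is "_ = ?rhs")
proof (rule eq_vecI)
  fix i assume "i < dim_vec ?rhs"
  then have i: "i < n" by (simp add: vander_comb_def)
  have "(frob p *\<^sub>v vander_comb n x y) $ i = (\<Sum>j<n. frob p $$ (i, j) * (\<Sum>k<n. y k * x k ^ (n - 1 - j)))"
    using frob_carrier[of p] assms i by (simp add: vander_comb_def scalar_prod_def lessThan_atLeast0)
  also have "\<dots> = (\<Sum>k<n. y k * (\<Sum>j<n. frob p $$ (i, j) * x k ^ (n - 1 - j)))"
    by (simp add: sum_distrib_left mult.left_commute) (rule sum.swap)
  also have "\<dots> = (\<Sum>k<n. y k * (x k ^ (n - i) - (if i = 0 then poly p (x k) else 0)))"
    using frob_row_times_powers[OF assms i] by simp
  also have "\<dots> = ?rhs $ i"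
  proof -
    have "x k ^ (n - i) = x k * x k ^ (n - 1 - i)" for k
      using i by (metis Suc_diff_Suc diff_Suc_1 power_Suc diff_commute)
    then show ?thesis using i by (simp add: vander_comb_def algebra_simps sum_subtractf)
  qed
  finally show "(frob p *\<^sub>v vander_comb n x y) $ i = ?rhs $ i" .
qed (use frob_carrier[of p] assms in \<open>simp add: vander_comb_def\<close>)

locale lagrange_nodes =
  fixes n :: nat and x :: "nat \<Rightarrow> 'a::field"
  assumes inj_on_nodes: "inj_on x {..<n}"
begin

definition node_poly :: "'a poly" where
  "node_poly = (\<Prod>i<n. [:- x i, 1:])"

definition lagrange_lc :: "nat \<Rightarrow> 'a" where
  "lagrange_lc k = inverse (\<Prod>i\<in>{..<n} - {k}. x k - x i)"

definition lagrange_basis :: "nat \<Rightarrow> 'a poly" where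
  "lagrange_basis k = smult (lagrange_lc k) (\<Prod>i\<in>{..<n} - {k}. [:- x i, 1:])"

lemma node_diff_prod_nonzero: "k < n \<Longrightarrow> (\<Prod>i\<in>{..<n} - {k}. x k - x i) \<noteq> 0"
  using inj_on_nodes by (auto simp: inj_on_def)

lemma lagrange_lc_nonzero: "k < n \<Longrightarrow> lagrange_lc k \<noteq> 0"
  using node_diff_prod_nonzero by (simp add: lagrange_lc_def)

lemma poly_lagrange_basis: "poly (lagrange_basis k) t = lagrange_lc k * (\<Prod>i\<in>{..<n} - {k}. t - x i)"
  by (simp add: lagrange_basis_def poly_prod)

lemma poly_lagrange_basis_node:
  assumes "k < n" "j < n"
  shows "poly (lagrange_basis k) (x j) = (if j = k then 1 else 0)"
proof (cases "j = k")
  case True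
  then show ?thesis
    using node_diff_prod_nonzero[OF \<open>k < n\<close>] by (simp add: poly_lagrange_basis lagrange_lc_def)
next
  case False
  then have "(\<Prod>i\<in>{..<n} - {k}. x j - x i) = 0"
    using \<open>j < n\<close> by (intro prod_zero) auto
  then show ?thesis using False by (simp add: poly_lagrange_basis)
qed

lemma degree_lagrange_basis: "k < n \<Longrightarrow> degree (lagrange_basis k) = n - 1"
  using lagrange_lc_nonzero
  by (simp add: lagrange_basis_def degree_prod_eq_sum_degree)

lemma coeff_lagrange_basis_top:
  assumes "k < n"
  shows "coeff (lagrange_basis k) (n - 1) = lagrange_lc k"
proof -
  let ?W = "\<Prod>i\<in>{..<n} - {k}. [:- x i, 1:]"
  have "degree ?W = n - 1" using assms by (simp add: degree_prod_eq_sum_degree)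
  moreover have "lead_coeff ?W = 1" by (simp only: lead_coeff_prod) simp
  ultimately show ?thesis by (simp add: lagrange_basis_def)
qed

lemma lagrange_interpolation:
  assumes "degree q < n"
  shows "q = (\<Sum>k<n. smult (poly q (x k)) (lagrange_basis k))"
proof -
  have card: "card (x ` {..<n}) = n" using inj_on_nodes by (simp add: card_image)
  have "degree (\<Sum>k<n. smult (poly q (x k)) (lagrange_basis k)) \<le> n - 1"
    by (intro degree_sum_le order_trans[OF degree_smult_le]) (auto simp: degree_lagrange_basis)
  then have "degree (\<Sum>k<n. smult (poly q (x k)) (lagrange_basis k)) < card (x ` {..<n})"
    using assms card by linarith
  moreover have "poly q t = poly (\<Sum>k<n. smult (poly q (x k)) (lagrange_basis k)) t"
    if "t \<in> x ` {..<n}" for t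
  proof -
    obtain j where j: "j < n" "t = x j" using \<open>t \<in> x ` {..<n}\<close> by auto
    have "poly (\<Sum>k<n. smult (poly q (x k)) (lagrange_basis k)) t
        = (\<Sum>k<n. if k = j then poly q (x j) else 0)"
      using j by (simp add: poly_sum poly_lagrange_basis_node if_distrib cong: if_cong)
    then show ?thesis using j by simp
  qed
  ultimately show ?thesis
    using assms card by (intro poly_eqI_degree[of "x ` {..<n}"]) auto
qed

lemma poly_lagrange_interpolation:
  "degree q < n \<Longrightarrow> poly q t = (\<Sum>k<n. poly q (x k) * poly (lagrange_basis k) t)"
  by (subst lagrange_interpolation) (simp_all add: poly_sum)

lemma poly_monic_minus_node_poly:
  assumes "0 < n" "degree p = n" "lead_coeff p = 1"
  shows "poly p t - poly node_poly t = (\<Sum>k<n. poly p (x k) * poly (lagrange_basis k) t)"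
proof -
  have "degree node_poly = n" by (simp add: node_poly_def degree_prod_eq_sum_degree)
  moreover have "lead_coeff node_poly = 1" unfolding node_poly_def by (simp only: lead_coeff_prod) simp
  ultimately
  have "degree (p - node_poly) < n"
    using assms by (intro degree_diff_less_same_lead_coeff) auto
  then have "poly (p - node_poly) t
      = (\<Sum>k<n. poly (p - node_poly) (x k) * poly (lagrange_basis k) t)"
    by (rule poly_lagrange_interpolation)
  also have "\<dots> = (\<Sum>k<n. poly p (x k) * poly (lagrange_basis k) t)"
    by (intro sum.cong) (auto simp: node_poly_def poly_prod)
  finally show ?thesis by simp
qed

lemma lagrange_lc_mult_node_poly:
  "k < n \<Longrightarrow> lagrange_lc k * poly node_poly t = (t - x k) * poly (lagrange_basis k) t"
  by (simp add: node_poly_def poly_prod poly_lagrange_basis prod.remove algebra_simps)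

lemma unit_vec_eq_vander_comb:
  assumes "j < n"
  shows "unit_vec n j = vander_comb n x (\<lambda>k. coeff (lagrange_basis k) (n - 1 - j))"
proof (rule eq_vecI)
  fix i assume "i < dim_vec (vander_comb n x (\<lambda>k. coeff (lagrange_basis k) (n - 1 - j)))"
  then have "i < n" by simp
  have interp: "monom 1 (n - 1 - i) = (\<Sum>k<n. smult (poly (monom 1 (n - 1 - i)) (x k)) (lagrange_basis k))"
    using \<open>i < n\<close> by (intro lagrange_interpolation) (simp add: degree_monom_eq)
  have "coeff (monom 1 (n - 1 - i)) (n - 1 - j)
      = (\<Sum>k<n. coeff (lagrange_basis k) (n - 1 - j) * x k ^ (n - 1 - i))"
    by (subst interp) (simp add: coeff_sum poly_monom mult.commute)
  moreover have "n - 1 - i = n - 1 - j \<longleftrightarrow> i = j" using \<open>i < n\<close> assms by auto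
  ultimately show "unit_vec n j $ i = vander_comb n x (\<lambda>k. coeff (lagrange_basis k) (n - 1 - j)) $ i"
    using \<open>i < n\<close> assms by (auto simp: vander_comb_def coeff_monom)
qed simp

end

lemma polyset_memE:
  assumes "p \<in> polyset n mu"
  obtains l where "p = (\<Prod>k\<in>{1..n}. [:- l k, 1:])" "\<forall>k\<in>{1..n}. mu (Suc k) \<le> l k \<and> l k \<le> mu k"
  using assms unfolding polyset_def by auto

lemma degree_polyset: "p \<in> polyset n mu \<Longrightarrow> degree p = n"
  by (elim polyset_memE) (simp add: degree_prod_eq_sum_degree)

lemma lead_coeff_polyset: "p \<in> polyset n mu \<Longrightarrow> lead_coeff p = 1"
  by (elim polyset_memE) (simp only: lead_coeff_prod, simp)

definition frob_prod :: "nat \<Rightarrow> real poly list \<Rightarrow> real mat" where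
  "frob_prod n ps = foldr (\<lambda>p A. frob p * A) ps (1\<^sub>m n)"

lemma frob_prod_Nil [simp]: "frob_prod n [] = 1\<^sub>m n"
  and frob_prod_Cons [simp]: "frob_prod n (p # ps) = frob p * frob_prod n ps"
  by (simp_all add: frob_prod_def)

lemma frob_prod_carrier: "\<forall>p\<in>set ps. degree p = n \<Longrightarrow> frob_prod n ps \<in> carrier_mat n n"
proof (induction ps)
  case (Cons p ps)
  then show ?case using frob_carrier[of p] by (auto intro: mult_carrier_mat)
qed simp

lemma frob_prod_polyset_carrier: "set ps \<subseteq> polyset n mu \<Longrightarrow> frob_prod n ps \<in> carrier_mat n n"
  by (intro frob_prod_carrier) (auto simp: degree_polyset)

locale interlacing_bounds =
  fixes n :: nat and mu :: "nat \<Rightarrow> real"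
  assumes n_pos: "n \<ge> 1"
    and mu_1_less_1: "mu 1 < 1"
    and mu_decreasing: "\<forall>k\<in>{1..n}. mu (Suc k) < mu k"
    and mu_last_pos: "mu (n + 1) > 0"
begin

lemma mu_strict_antimono: "1 \<le> i \<Longrightarrow> i < j \<Longrightarrow> j \<le> n + 1 \<Longrightarrow> mu j < mu i"
proof (induction j)
  case (Suc j)
  then have "mu (Suc j) < mu j" using mu_decreasing by auto
  then show ?case using Suc by (auto simp: less_Suc_eq)
qed simp

lemma mu_antimono: "1 \<le> i \<Longrightarrow> i \<le> j \<Longrightarrow> j \<le> n + 1 \<Longrightarrow> mu j \<le> mu i"
  using mu_strict_antimono by (cases "i = j") (auto intro: less_imp_le)

lemma mu_1_pos: "0 < mu 1"
  using mu_antimono[of 1 "n + 1"] mu_last_pos by simp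

definition nu :: "nat \<Rightarrow> real" where
  "nu k = mu (k + 2)"

lemma nu_strict_antimono: "i < j \<Longrightarrow> j < n \<Longrightarrow> nu j < nu i"
  unfolding nu_def by (rule mu_strict_antimono) auto

lemma nu_less_mu_1: "k < n \<Longrightarrow> nu k < mu 1"
  unfolding nu_def by (rule mu_strict_antimono) auto

lemma nu_pos: "k < n \<Longrightarrow> 0 < nu k"
  using mu_antimono[of "k + 2" "n + 1"] mu_last_pos by (simp add: nu_def)

sublocale lagrange_nodes n nu
  by unfold_locales (metis inj_onI lessThan_iff linorder_neqE_nat nu_strict_antimono less_irrefl)

lemma poly_polyset_mu_1_nonneg:
  assumes "p \<in> polyset n mu"
  shows "0 \<le> poly p (mu 1)"
proof -
  obtain l where p: "p = (\<Prod>k\<in>{1..n}. [:- l k, 1:])" and l: "\<forall>k\<in>{1..n}. mu (Suc k) \<le> l k \<and> l k \<le> mu k"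
    using assms by (rule polyset_memE)
  have "l k \<le> mu 1" if "k \<in> {1..n}" for k
    using l that mu_antimono[of 1 k] by fastforce
  then show ?thesis unfolding p poly_prod by (intro prod_nonneg) auto
qed

text \<open>Exactly the roots \<open>\<lambda>\<^sub>1, \<dots>, \<lambda>\<^sub>j\<^sub>+\<^sub>1\<close> lie at or above \<open>\<nu>\<^sub>j = \<mu>\<^sub>j\<^sub>+\<^sub>2\<close>.\<close>
lemma poly_polyset_node_sign:
  assumes "p \<in> polyset n mu" "j < n"
  shows "0 \<le> (-1) ^ Suc j * poly p (nu j)"
proof -
  obtain l where p: "p = (\<Prod>k\<in>{1..n}. [:- l k, 1:])" and l: "\<forall>k\<in>{1..n}. mu (Suc k) \<le> l k \<and> l k \<le> mu k"
    using assms(1) by (rule polyset_memE)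
  have "0 \<le> (-1) ^ card {1..Suc j} * (\<Prod>k\<in>{1..n}. nu j - l k)"
  proof (rule prod_nonneg_signed)
    fix k assume k: "k \<in> {1..Suc j}"
    then have "nu j \<le> mu (Suc k)" using assms(2) unfolding nu_def by (intro mu_antimono) auto
    moreover have "mu (Suc k) \<le> l k" using l k assms(2) by auto
    ultimately show "nu j - l k \<le> 0" by linarith
  next
    fix k assume k: "k \<in> {1..n} - {1..Suc j}"
    then have "mu k \<le> nu j" using assms(2) unfolding nu_def by (intro mu_antimono) auto
    moreover have "l k \<le> mu k" using l k by auto
    ultimately show "0 \<le> nu j - l k" by linarith
  qed (use assms(2) in auto)
  then show ?thesis by (simp add: p poly_prod)
qed

lemma lagrange_lc_sign:
  assumes "j < n"
  shows "0 < (-1) ^ j * lagrange_lc j"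
proof -
  let ?Q = "\<Prod>i\<in>{..<n} - {j}. nu j - nu i"
  have "0 \<le> (-1) ^ card {..<j} * ?Q"
  proof (rule prod_nonneg_signed)
    fix i assume "i \<in> {..<j}"
    then show "nu j - nu i \<le> 0" using nu_strict_antimono[of i j] assms by auto
  next
    fix i assume "i \<in> {..<n} - {j} - {..<j}"
    then show "0 \<le> nu j - nu i" using nu_strict_antimono[of j i] by auto
  qed (use assms in auto)
  then have "0 < (-1) ^ j * ?Q"
    unfolding card_lessThan by (rule order_le_neq_trans) (use node_diff_prod_nonzero[OF assms] in simp)
  also have "(-1) ^ j * ?Q = inverse ((-1) ^ j * lagrange_lc j)"
    by (simp add: lagrange_lc_def inverse_mult_distrib flip: power_inverse)
  finally show ?thesis by (simp only: inverse_positive_iff_positive)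
qed

lemma poly_lagrange_basis_mu_1_sign:
  assumes "j < n"
  shows "0 < (-1) ^ j * poly (lagrange_basis j) (mu 1)"
proof -
  have "0 < (\<Prod>i\<in>{..<n} - {j}. mu 1 - nu i)"
    using nu_less_mu_1 by (intro prod_pos) auto
  then show ?thesis
    using lagrange_lc_sign[OF assms] by (simp add: poly_lagrange_basis mult.assoc[symmetric])
qed

lemma poly_polyset_node_mult_lagrange_nonpos:
  assumes "p \<in> polyset n mu" "j < n"
  shows "poly p (nu j) * poly (lagrange_basis j) (mu 1) \<le> 0"
proof -
  have "0 \<le> ((-1) ^ Suc j * poly p (nu j)) * ((-1) ^ j * poly (lagrange_basis j) (mu 1))"
    using poly_polyset_node_sign[OF assms] less_imp_le[OF poly_lagrange_basis_mu_1_sign[OF assms(2)]]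
    by (rule mult_nonneg_nonneg)
  also have "\<dots> = ((-1) ^ Suc j * (-1) ^ j) * (poly p (nu j) * poly (lagrange_basis j) (mu 1))"
    by (simp only: mult_ac)
  also have "\<dots> = - (poly p (nu j) * poly (lagrange_basis j) (mu 1))"
    by (simp flip: power_add)
  finally show ?thesis by simp
qed

definition weight :: "nat \<Rightarrow> real" where
  "weight k = \<bar>poly (lagrange_basis k) (mu 1)\<bar>"

lemma weight_pos:
  assumes "k < n"
  shows "0 < weight k"
proof -
  have "poly (lagrange_basis k) (mu 1) \<noteq> 0"
    using poly_lagrange_basis_mu_1_sign[OF assms] by auto
  then show ?thesis by (simp add: weight_def)
qed

lemma poly_node_poly_mu_1_pos: "0 < poly node_poly (mu 1)"
  unfolding node_poly_def poly_prod using nu_less_mu_1 by (intro prod_pos) auto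

lemma lagrange_lc_weight:
  assumes "k < n"
  shows "\<bar>lagrange_lc k\<bar> * poly node_poly (mu 1) = (mu 1 - nu k) * weight k"
proof -
  have "\<bar>lagrange_lc k\<bar> * poly node_poly (mu 1) = \<bar>lagrange_lc k * poly node_poly (mu 1)\<bar>"
    using poly_node_poly_mu_1_pos by (simp add: abs_mult)
  also have "\<dots> = \<bar>(mu 1 - nu k) * poly (lagrange_basis k) (mu 1)\<bar>"
    using lagrange_lc_mult_node_poly[OF assms] by simp
  also have "\<dots> = (mu 1 - nu k) * weight k"
    using nu_less_mu_1[OF assms] by (simp add: abs_mult weight_def)
  finally show ?thesis .
qed

lemma weighted_node_values_le:
  assumes "p \<in> polyset n mu"
  shows "(\<Sum>j<n. \<bar>poly p (nu j)\<bar> * weight j) \<le> poly node_poly (mu 1)"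
proof -
  have "(\<Sum>j<n. \<bar>poly p (nu j)\<bar> * weight j) = - (\<Sum>j<n. poly p (nu j) * poly (lagrange_basis j) (mu 1))"
    using poly_polyset_node_mult_lagrange_nonpos[OF assms]
    by (simp add: weight_def sum_negf flip: abs_mult)
  also have "\<dots> = poly node_poly (mu 1) - poly p (mu 1)"
    using poly_monic_minus_node_poly[of p "mu 1"] n_pos degree_polyset[OF assms] lead_coeff_polyset[OF assms]
    by simp
  finally show ?thesis using poly_polyset_mu_1_nonneg[OF assms] by simp
qed

definition frob_node_coords :: "real poly \<Rightarrow> (nat \<Rightarrow> real) \<Rightarrow> nat \<Rightarrow> real" where
  "frob_node_coords p y k = nu k * y k - (\<Sum>j<n. poly p (nu j) * y j) * lagrange_lc k"

lemma frob_mult_vander_comb_nodes: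
  assumes "degree p = n" "lead_coeff p = 1"
  shows "frob p *\<^sub>v vander_comb n nu y = vander_comb n nu (frob_node_coords p y)"
proof -
  have "unit_vec n 0 = vander_comb n nu lagrange_lc"
    using unit_vec_eq_vander_comb[of 0] n_pos coeff_lagrange_basis_top
    by (simp cong: vander_comb_cong)
  then show ?thesis
    using frob_mult_vander_comb[OF assms, of nu y]
    by (simp add: frob_node_coords_def[abs_def] vander_comb_diff_smult)
qed

lemma frob_node_coords_contraction:
  assumes p: "p \<in> polyset n mu" and "0 \<le> t" and y: "\<forall>k<n. \<bar>y k\<bar> \<le> t * weight k" and "k < n"
  shows "\<bar>frob_node_coords p y k\<bar> \<le> mu 1 * t * weight k"
proof -
  have "\<bar>\<Sum>j<n. poly p (nu j) * y j\<bar> \<le> (\<Sum>j<n. \<bar>poly p (nu j)\<bar> * (t * weight j))"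
    using y by (intro order_trans[OF sum_abs] sum_mono) (auto simp: abs_mult intro: mult_left_mono)
  also have "\<dots> = t * (\<Sum>j<n. \<bar>poly p (nu j)\<bar> * weight j)"
    by (simp add: sum_distrib_left mult_ac)
  also have "\<dots> \<le> t * poly node_poly (mu 1)"
    using weighted_node_values_le[OF p] \<open>0 \<le> t\<close> by (intro mult_left_mono)
  finally have S: "\<bar>\<Sum>j<n. poly p (nu j) * y j\<bar> \<le> t * poly node_poly (mu 1)" .
  have "\<bar>frob_node_coords p y k\<bar> \<le> nu k * \<bar>y k\<bar> + \<bar>\<Sum>j<n. poly p (nu j) * y j\<bar> * \<bar>lagrange_lc k\<bar>"
    using nu_pos[OF \<open>k < n\<close>] by (simp add: frob_node_coords_def abs_mult order_trans[OF abs_triangle_ineq4])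
  also have "\<dots> \<le> nu k * (t * weight k) + (t * poly node_poly (mu 1)) * \<bar>lagrange_lc k\<bar>"
    using nu_pos[OF \<open>k < n\<close>] y \<open>k < n\<close> S by (intro add_mono mult_left_mono mult_right_mono) auto
  also have "\<dots> = t * (nu k * weight k + \<bar>lagrange_lc k\<bar> * poly node_poly (mu 1))"
    by (simp add: algebra_simps)
  also have "\<dots> = mu 1 * t * weight k"
    using lagrange_lc_weight[OF \<open>k < n\<close>] by (simp add: algebra_simps)
  finally show ?thesis .
qed

lemma frob_prod_vander_comb:
  assumes "set ps \<subseteq> polyset n mu" "0 \<le> t" "\<forall>k<n. \<bar>y k\<bar> \<le> t * weight k"
  shows "\<exists>y'. frob_prod n ps *\<^sub>v vander_comb n nu y = vander_comb n nu y'
           \<and> (\<forall>k<n. \<bar>y' k\<bar> \<le> mu 1 ^ length ps * t * weight k)"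
  using assms(1)
proof (induction ps)
  case Nil
  then show ?case using assms(3) by auto
next
  case (Cons p ps)
  then obtain y' where y': "frob_prod n ps *\<^sub>v vander_comb n nu y = vander_comb n nu y'"
    "\<forall>k<n. \<bar>y' k\<bar> \<le> mu 1 ^ length ps * t * weight k" by auto
  have p: "p \<in> polyset n mu" using Cons.prems by simp
  have "frob_prod n ps \<in> carrier_mat n n"
    using Cons.prems frob_prod_polyset_carrier[of ps n mu] by simp
  moreover have "frob p \<in> carrier_mat n n" using frob_carrier[of p] degree_polyset[OF p] by simp
  ultimately have "frob_prod n (p # ps) *\<^sub>v vander_comb n nu y = frob p *\<^sub>v vander_comb n nu y'"
    using y'(1) by (simp add: assoc_mult_mat_vec)
  also have "\<dots> = vander_comb n nu (frob_node_coords p y')"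
    using frob_mult_vander_comb_nodes degree_polyset[OF p] lead_coeff_polyset[OF p] by simp
  finally show ?case
    using frob_node_coords_contraction[OF p _ y'(2)] assms(2) mu_1_pos
    by (intro exI[of _ "frob_node_coords p y'"]) (auto simp: mult_ac)
qed

definition unit_vec_weighted_norm :: "nat \<Rightarrow> real" where
  "unit_vec_weighted_norm j = (\<Sum>k<n. \<bar>coeff (lagrange_basis k) (n - 1 - j)\<bar> / weight k)"

lemma unit_vec_weighted_norm_nonneg: "0 \<le> unit_vec_weighted_norm j"
  unfolding unit_vec_weighted_norm_def using weight_pos by (intro sum_nonneg divide_nonneg_pos) auto

lemma frob_prod_entry_le:
  assumes ps: "set ps \<subseteq> polyset n mu" and "i < n" "j < n"
  shows "\<bar>frob_prod n ps $$ (i, j)\<bar> \<le> mu 1 ^ length ps * unit_vec_weighted_norm j * (\<Sum>k<n. weight k)"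
proof -
  let ?e = "\<lambda>k. coeff (lagrange_basis k) (n - 1 - j)"
  have e_bound: "\<forall>k<n. \<bar>?e k\<bar> \<le> unit_vec_weighted_norm j * weight k"
  proof (intro allI impI)
    fix k assume "k < n"
    have "\<bar>?e k\<bar> / weight k \<le> unit_vec_weighted_norm j"
      unfolding unit_vec_weighted_norm_def using weight_pos \<open>k < n\<close>
      by (intro member_le_sum) (auto intro!: divide_nonneg_pos)
    then show "\<bar>?e k\<bar> \<le> unit_vec_weighted_norm j * weight k"
      using weight_pos[OF \<open>k < n\<close>] by (simp add: pos_divide_le_eq)
  qed
  obtain y' where y': "frob_prod n ps *\<^sub>v vander_comb n nu ?e = vander_comb n nu y'"
    "\<forall>k<n. \<bar>y' k\<bar> \<le> mu 1 ^ length ps * unit_vec_weighted_norm j * weight k"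
    using frob_prod_vander_comb[OF ps unit_vec_weighted_norm_nonneg e_bound] by blast
  have "frob_prod n ps $$ (i, j) = (frob_prod n ps *\<^sub>v unit_vec n j) $ i"
    using frob_prod_polyset_carrier[OF ps] \<open>i < n\<close> \<open>j < n\<close> by simp
  also have "\<dots> = vander_comb n nu y' $ i"
    using unit_vec_eq_vander_comb[OF \<open>j < n\<close>] y'(1) by simp
  also have "\<bar>\<dots>\<bar> \<le> (\<Sum>k<n. \<bar>y' k\<bar>)"
  proof (rule abs_vander_comb_le)
    show "\<forall>k<n. \<bar>nu k\<bar> \<le> 1"
      using nu_pos nu_less_mu_1 mu_1_less_1 by (metis abs_of_pos less_imp_le order.strict_trans)
  qed (rule \<open>i < n\<close>)
  also have "\<dots> \<le> (\<Sum>k<n. mu 1 ^ length ps * unit_vec_weighted_norm j * weight k)"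
    using y'(2) by (intro sum_mono) auto
  finally show ?thesis by (simp add: sum_distrib_left)
qed

lemma frob_prod_norm_le:
  "\<exists>C>0. \<forall>ps. set ps \<subseteq> polyset n mu \<longrightarrow> mat_norm (frob_prod n ps) \<le> C * mu 1 ^ length ps"
proof -
  define C where "C = 1 + real n * (\<Sum>j<n. unit_vec_weighted_norm j) * (\<Sum>k<n. weight k)"
  have "0 \<le> (\<Sum>k<n. weight k)" using weight_pos by (intro sum_nonneg) (auto intro: less_imp_le)
  then have "0 < C" unfolding C_def
    using unit_vec_weighted_norm_nonneg by (simp add: sum_nonneg add_pos_nonneg)
  moreover have "mat_norm (frob_prod n ps) \<le> C * mu 1 ^ length ps" if ps: "set ps \<subseteq> polyset n mu" for ps
  proof -
    have "mat_norm (frob_prod n ps) = (\<Sum>i<n. \<Sum>j<n. \<bar>frob_prod n ps $$ (i, j)\<bar>)"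
      using frob_prod_polyset_carrier[OF ps] by (simp add: mat_norm_def)
    also have "\<dots> \<le> (\<Sum>i<n. \<Sum>j<n. mu 1 ^ length ps * unit_vec_weighted_norm j * (\<Sum>k<n. weight k))"
      using frob_prod_entry_le[OF ps] by (intro sum_mono) auto
    also have "\<dots> = (C - 1) * mu 1 ^ length ps"
      by (simp add: C_def sum_distrib_left sum_distrib_right mult_ac)
    also have "\<dots> \<le> C * mu 1 ^ length ps"
      using mu_1_pos by simp
    finally show ?thesis .
  qed
  ultimately show ?thesis by blast
qed

end

theorem lemma3p2:
  fixes n :: nat and mu :: "nat \<Rightarrow> real"
  assumes "n \<ge> 1"
    and "mu 1 < 1"
    and "\<forall>k\<in>{1..n}. mu (Suc k) < mu k"
    and "mu (n + 1) > 0"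
  shows "\<exists>C>0. \<exists>c. 0 < c \<and> c < 1 \<and>
           (\<forall>m\<ge>1. \<forall>ps :: real poly list. length ps = m \<and> set ps \<subseteq> polyset n mu \<longrightarrow>
              mat_norm (foldr (\<lambda>p A. frob p * A) ps (1\<^sub>m n)) \<le> C * c ^ m)"
proof -
  interpret interlacing_bounds n mu
    using assms by unfold_locales
  obtain C where "C > 0"
    and C: "\<forall>ps. set ps \<subseteq> polyset n mu \<longrightarrow> mat_norm (frob_prod n ps) \<le> C * mu 1 ^ length ps"
    using frob_prod_norm_le by blast
  have "\<forall>m\<ge>1. \<forall>ps. length ps = m \<and> set ps \<subseteq> polyset n mu \<longrightarrow>
      mat_norm (foldr (\<lambda>p A. frob p * A) ps (1\<^sub>m n)) \<le> C * mu 1 ^ m"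
    using C by (auto simp: frob_prod_def)
  then show ?thesis
    using \<open>C > 0\<close> mu_1_pos mu_1_less_1 by blast
qed

end
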